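(* Let $\sigma^2>0$, let $\varphi:[0,\infty)\to\mathbb{R}$ be a Stieltjes function with $\varphi(0)=1$, and let $\psi:[0,\infty)\to(0,\infty)$ be strictly positive with a completely monotone derivative. Define $$C(\theta,u)=\frac{\sigma^2}{\psi(u^2)}\,\varphi\!\left(\frac{\theta}{\psi(u^2)}\right),\qquad \theta\in[0,\pi],\ u\in\mathbb{R}.$$ Then $C$ is a covariance function on $\mathbb{S}^d\times\mathbb{R}$ for every positive integer $d$.
   Context: A function $\varphi:[0,\infty)\to\mathbb{R}$ is a Stieltjes function if $\varphi(t)=\int_{[0,\infty)}\frac{\mu(d\xi)}{t+\xi}$ for $t\ge0$, where $\mu$ is a positive bounded measure; the requirement $\varphi(0)=1$ means $\int\xi^{-1}\mu(d\xi)=1$. A function $f$ on $(0,\infty)$ is completely monotone if it is infinitely differentiable with $(-1)^nf^{(n)}(t)\ge0$ for all $n\ge0$, $t>0$. $\mathbb{S}^d=\{\mathbf{s}\in\mathbb{R}^{d+1}:\|\mathbf{s}\|=1\}$ with great circle distance $\theta(\mathbf{s}_1,\mathbf{s}_2)=\arccos(\mathbf{s}_1^\top\mathbf{s}_2)$. $C:[0,\pi]\times\mathbb{R}\to\mathbb{R}$ is a covariance function on $\mathbb{S}^d\times\mathbb{R}$ if for every finite collection $(\mathbf{s}_k,t_k)\in\mathbb{S}^d\times\mathbb{R}$ and reals $a_k$, $\sum_{k,h}a_ka_hC(\theta(\mathbf{s}_k,\mathbf{s}_h),t_k-t_h)\ge0$. *)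

theory Defs
  imports "HOL-Analysis.Analysis"
begin

text \<open>Stieltjes function on [0,inf): phi t = integral of 1/(t+xi) w.r.t. a positive bounded
  Borel measure mu concentrated on [0,inf), for all t >= 0. Since phi 0 must be a real number,
  mu has no atom at 0; we state the support condition as mu((-inf,0]) = 0.\<close>
definition stieltjes_fun :: "(real \<Rightarrow> real) \<Rightarrow> bool" where
  "stieltjes_fun \<phi> \<longleftrightarrow>
     (\<exists>M :: real measure. sets M = sets borel \<and> finite_measure M \<and>
        emeasure M {..0} = 0 \<and>
        (\<forall>t\<ge>0. integrable M (\<lambda>\<xi>. 1 / (t + \<xi>)) \<and> \<phi> t = (\<integral>\<xi>. 1 / (t + \<xi>) \<partial>M)))"

definition completely_monotone :: "(real \<Rightarrow> real) \<Rightarrow> bool" where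
  "completely_monotone f \<longleftrightarrow>
     (\<forall>n::nat. \<forall>t>0. (deriv ^^ n) f differentiable (at t) \<and> (-1) ^ n * (deriv ^^ n) f t \<ge> 0)"

definition sphere_pts :: "nat \<Rightarrow> (nat \<Rightarrow> real) set" where
  "sphere_pts d = {x. (\<forall>i>d. x i = 0) \<and> (\<Sum>i\<le>d. (x i)\<^sup>2) = 1}"

definition gc_dist :: "nat \<Rightarrow> (nat \<Rightarrow> real) \<Rightarrow> (nat \<Rightarrow> real) \<Rightarrow> real" where
  "gc_dist d x y = arccos (\<Sum>i\<le>d. x i * y i)"

definition covariance_sphere_time :: "nat \<Rightarrow> (real \<Rightarrow> real \<Rightarrow> real) \<Rightarrow> bool" where
  "covariance_sphere_time d C \<longleftrightarrow>
     (\<forall>(n::nat) (s::nat \<Rightarrow> nat \<Rightarrow> real) (t::nat \<Rightarrow> real) (a::nat \<Rightarrow> real).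
        (\<forall>k<n. s k \<in> sphere_pts d) \<longrightarrow>
        (\<Sum>k<n. \<Sum>h<n. a k * a h * C (gc_dist d (s k) (s h)) (t k - t h)) \<ge> 0)"

end

theory Submission
  imports Defs
begin

text \<open>By the Stieltjes representation phi t = integral of 1 / (t + xi) d mu (xi), the covariance
  is C (theta, u) = sigma2 * integral of 1 / (theta + xi * psi (u^2)) d mu (xi), so it suffices that
  for every xi > 0 the kernel 1 / (theta + xi * psi (u^2)) is positive definite. Positive definite
  matrices are closed under sums, entrywise products and limits, hence under power series with
  nonnegative coefficients. Writing 1 / X as a limit of Riemann sums of the Laplace integral of
  exp (- s X), it remains to treat exp (- c theta) * exp (- c xi psi (u^2)) for c >= 0. The first
  factor is positive definite on every sphere because exp (c arcsin) has a power series with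
  nonnegative coefficients. For the second, the Taylor series of psi at b (which converges since psi'
  is completely monotone) makes exp (- c psi (b (1 - z))) a power series in z with nonnegative
  coefficients; substituting the Gaussian kernel z = exp (- u^2 / b) and letting b tend to infinity
  gives exp (- c psi (u^2)).\<close>

section \<open>Limits of Gram matrices\<close>

definition gram :: "nat \<Rightarrow> (nat \<Rightarrow> nat \<Rightarrow> real) \<Rightarrow> bool" where
  "gram n M \<longleftrightarrow> (\<exists>vs. \<forall>k<n. \<forall>h<n. M k h = (\<Sum>v\<leftarrow>vs. v k * v h))"

text \<open>The closure of the Gram matrices consists of the
  positive semidefinite matrices; working with Gram matrices makes closure under entrywise
  products elementary.\<close>
definition gram_limit :: "nat \<Rightarrow> (nat \<Rightarrow> nat \<Rightarrow> real) \<Rightarrow> bool" where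
  "gram_limit n M \<longleftrightarrow> (\<forall>e>0. \<exists>G. gram n G \<and> (\<forall>k<n. \<forall>h<n. \<bar>G k h - M k h\<bar> < e))"

lemma gram_zero: "gram n (\<lambda>k h. 0)"
  unfolding gram_def by (rule exI[of _ "[]"]) simp

lemma gram_rank1: "gram n (\<lambda>k h. f k * f h)"
  unfolding gram_def by (rule exI[of _ "[f]"]) simp

lemma gram_add:
  assumes "gram n A" "gram n B"
  shows "gram n (\<lambda>k h. A k h + B k h)"
proof -
  from assms obtain vs ws where "\<forall>k<n. \<forall>h<n. A k h = (\<Sum>v\<leftarrow>vs. v k * v h)"
    and "\<forall>k<n. \<forall>h<n. B k h = (\<Sum>v\<leftarrow>ws. v k * v h)" unfolding gram_def by blast
  then have "\<forall>k<n. \<forall>h<n. A k h + B k h = (\<Sum>v\<leftarrow>vs @ ws. v k * v h)" by simp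
  then show ?thesis unfolding gram_def by blast
qed

lemma sum_list_product_mult:
  "(\<Sum>(v, w)\<leftarrow>List.product vs ws. f v * g w) = (\<Sum>v\<leftarrow>vs. f v) * (\<Sum>w\<leftarrow>ws. g w)"
  for f :: "'a \<Rightarrow> 'c::comm_semiring_0"
  by (induction vs) (simp_all add: o_def sum_list_const_mult algebra_simps)

lemma gram_mult:
  assumes "gram n A" "gram n B"
  shows "gram n (\<lambda>k h. A k h * B k h)"
proof -
  from assms obtain vs ws where vs: "\<forall>k<n. \<forall>h<n. A k h = (\<Sum>v\<leftarrow>vs. v k * v h)"
    and ws: "\<forall>k<n. \<forall>h<n. B k h = (\<Sum>w\<leftarrow>ws. w k * w h)"
    unfolding gram_def by blast
  define us where "us = map (\<lambda>(v, w) k. v k * w k) (List.product vs ws)"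
  have "(\<Sum>u\<leftarrow>us. u k * u h) = (\<Sum>(v, w)\<leftarrow>List.product vs ws. (v k * v h) * (w k * w h))" for k h
    unfolding us_def by (simp add: o_def split_def mult_ac)
  then have "\<forall>k<n. \<forall>h<n. A k h * B k h = (\<Sum>u\<leftarrow>us. u k * u h)"
    using vs ws by (simp add: sum_list_product_mult)
  then show ?thesis unfolding gram_def by blast
qed

lemma gram_quadratic_form_nonneg:
  assumes "gram n M"
  shows "(\<Sum>k<n. \<Sum>h<n. a k * a h * M k h) \<ge> 0"
proof -
  from assms obtain vs where vs: "\<forall>k<n. \<forall>h<n. M k h = (\<Sum>v\<leftarrow>vs. v k * v h)"
    unfolding gram_def by blast
  have "(\<Sum>k<n. \<Sum>h<n. a k * a h * (\<Sum>v\<leftarrow>vs. v k * v h)) = (\<Sum>v\<leftarrow>vs. (\<Sum>k<n. a k * v k)\<^sup>2)"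
  proof (induction vs)
    case (Cons v vs)
    have "(\<Sum>k<n. \<Sum>h<n. a k * a h * (\<Sum>w\<leftarrow>v # vs. w k * w h))
        = (\<Sum>k<n. \<Sum>h<n. (a k * v k) * (a h * v h))
          + (\<Sum>k<n. \<Sum>h<n. a k * a h * (\<Sum>w\<leftarrow>vs. w k * w h))"
      by (simp add: ring_distribs sum.distrib mult_ac)
    also have "(\<Sum>k<n. \<Sum>h<n. (a k * v k) * (a h * v h)) = (\<Sum>k<n. a k * v k)\<^sup>2"
      by (simp only: power2_eq_square sum_product)
    finally show ?case using Cons by simp
  qed simp
  moreover have "(\<Sum>v\<leftarrow>vs. (\<Sum>k<n. a k * v k)\<^sup>2) \<ge> 0"
    by (induction vs) auto
  moreover have "(\<Sum>k<n. \<Sum>h<n. a k * a h * M k h)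
      = (\<Sum>k<n. \<Sum>h<n. a k * a h * (\<Sum>v\<leftarrow>vs. v k * v h))"
    using vs by (intro sum.cong refl) auto
  ultimately show ?thesis by simp
qed

lemma gram_imp_gram_limit: "gram n G \<Longrightarrow> gram_limit n G"
  unfolding gram_limit_def by (intro allI impI exI[of _ G]) auto

lemma gram_limit_cong:
  assumes "gram_limit n A" "\<And>k h. k < n \<Longrightarrow> h < n \<Longrightarrow> A k h = B k h"
  shows "gram_limit n B"
  using assms unfolding gram_limit_def by (metis (no_types, lifting))

lemma gram_limit_tendsto:
  assumes F: "F \<noteq> bot" and ev: "eventually (\<lambda>x. gram_limit n (M x)) F"
    and lim: "\<And>k h. k < n \<Longrightarrow> h < n \<Longrightarrow> ((\<lambda>x. M x k h) \<longlongrightarrow> L k h) F"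
  shows "gram_limit n L"
  unfolding gram_limit_def
proof (intro allI impI)
  fix e :: real assume e: "e > 0"
  have "eventually (\<lambda>x. \<forall>k\<in>{..<n}. \<forall>h\<in>{..<n}. dist (M x k h) (L k h) < e/2) F"
    using lim e by (intro eventually_ball_finite ballI tendstoD) simp_all
  with ev have "eventually (\<lambda>x. gram_limit n (M x) \<and>
      (\<forall>k\<in>{..<n}. \<forall>h\<in>{..<n}. dist (M x k h) (L k h) < e/2)) F"
    by (rule eventually_conj)
  from eventually_happens'[OF F this] obtain x where x: "gram_limit n (M x)"
    "\<forall>k<n. \<forall>h<n. dist (M x k h) (L k h) < e/2"
    by auto
  from x(1) e obtain G where G: "gram n G" "\<forall>k<n. \<forall>h<n. \<bar>G k h - M x k h\<bar> < e/2"
    unfolding gram_limit_def by (meson half_gt_zero)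
  have "\<bar>G k h - L k h\<bar> < e" if "k < n" "h < n" for k h
  proof -
    have "\<bar>G k h - M x k h\<bar> < e/2" "\<bar>M x k h - L k h\<bar> < e/2"
      using G(2) x(2) that by (auto simp: dist_real_def)
    then show ?thesis by linarith
  qed
  with G(1) show "\<exists>G. gram n G \<and> (\<forall>k<n. \<forall>h<n. \<bar>G k h - L k h\<bar> < e)" by blast
qed

lemma gram_limit_obtain_sequence:
  assumes "gram_limit n M"
  obtains G where "\<And>j. gram n (G j)"
    and "\<And>k h. k < n \<Longrightarrow> h < n \<Longrightarrow> (\<lambda>j. G j k h) \<longlonglongrightarrow> M k h"
proof -
  have "\<forall>j. \<exists>G. gram n G \<and> (\<forall>k<n. \<forall>h<n. \<bar>G k h - M k h\<bar> < inverse (real (Suc j)))"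
    using assms unfolding gram_limit_def by simp
  then obtain G where G: "\<And>j. gram n (G j)"
    "\<And>j. \<forall>k<n. \<forall>h<n. \<bar>G j k h - M k h\<bar> < inverse (real (Suc j))"
    by metis
  have "(\<lambda>j. G j k h) \<longlonglongrightarrow> M k h" if "k < n" "h < n" for k h
  proof -
    have "(\<lambda>j. G j k h - M k h) \<longlonglongrightarrow> 0"
      using G(2) that
      by (intro Lim_null_comparison[OF _ LIMSEQ_inverse_real_of_nat] always_eventually)
         (auto intro: less_imp_le)
    then show ?thesis by (simp add: LIM_zero_iff)
  qed
  with G(1) show ?thesis using that by blast
qed

lemma gram_limit_quadratic_form_nonneg:
  assumes "gram_limit n M"
  shows "(\<Sum>k<n. \<Sum>h<n. a k * a h * M k h) \<ge> 0"
proof -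
  obtain G where G: "\<And>j. gram n (G j)"
    "\<And>k h. k < n \<Longrightarrow> h < n \<Longrightarrow> (\<lambda>j. G j k h) \<longlonglongrightarrow> M k h"
    using gram_limit_obtain_sequence[OF assms] by blast
  have "(\<lambda>j. \<Sum>k<n. \<Sum>h<n. a k * a h * G j k h) \<longlonglongrightarrow> (\<Sum>k<n. \<Sum>h<n. a k * a h * M k h)"
    using G(2) by (intro tendsto_sum tendsto_mult tendsto_const) auto
  then show ?thesis
    using G(1) gram_quadratic_form_nonneg by (intro LIMSEQ_le_const[of _ _ 0]) auto
qed

lemma gram_limit_binop:
  assumes "gram_limit n A" "gram_limit n B"
    and gram_op: "\<And>X Y. gram n X \<Longrightarrow> gram n Y \<Longrightarrow> gram n (\<lambda>k h. f (X k h) (Y k h))"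
    and cont: "\<And>x y. isCont (\<lambda>p. f (fst p) (snd p)) (x, y)"
  shows "gram_limit n (\<lambda>k h. f (A k h) (B k h))"
proof -
  obtain G where G: "\<And>j. gram n (G j)"
    "\<And>k h. k < n \<Longrightarrow> h < n \<Longrightarrow> (\<lambda>j. G j k h) \<longlonglongrightarrow> A k h"
    using gram_limit_obtain_sequence[OF assms(1)] by blast
  obtain H where H: "\<And>j. gram n (H j)"
    "\<And>k h. k < n \<Longrightarrow> h < n \<Longrightarrow> (\<lambda>j. H j k h) \<longlonglongrightarrow> B k h"
    using gram_limit_obtain_sequence[OF assms(2)] by blast
  show ?thesis
  proof (rule gram_limit_tendsto[of sequentially n "\<lambda>j k h. f (G j k h) (H j k h)"])
    show "\<forall>\<^sub>F j in sequentially. gram_limit n (\<lambda>k h. f (G j k h) (H j k h))"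
      using G(1) H(1) gram_op gram_imp_gram_limit by (intro always_eventually) blast
    fix k h assume "k < n" "h < n"
    then have "((\<lambda>j. (G j k h, H j k h)) \<longlongrightarrow> (A k h, B k h)) sequentially"
      using G(2) H(2) by (intro tendsto_Pair)
    from isCont_tendsto_compose[OF cont this]
    show "(\<lambda>j. f (G j k h) (H j k h)) \<longlonglongrightarrow> f (A k h) (B k h)" by simp
  qed simp
qed

lemma gram_limit_add:
  "gram_limit n A \<Longrightarrow> gram_limit n B \<Longrightarrow> gram_limit n (\<lambda>k h. A k h + B k h)"
  by (rule gram_limit_binop[where f="(+)"]) (auto intro: gram_add continuous_intros)

lemma gram_limit_mult:
  "gram_limit n A \<Longrightarrow> gram_limit n B \<Longrightarrow> gram_limit n (\<lambda>k h. A k h * B k h)"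
  by (rule gram_limit_binop[where f="(*)"]) (auto intro: gram_mult continuous_intros)

lemma gram_limit_rank1: "gram_limit n (\<lambda>k h. f k * f h)"
  by (rule gram_imp_gram_limit[OF gram_rank1])

lemma gram_limit_const:
  assumes "c \<ge> 0"
  shows "gram_limit n (\<lambda>k h. c)"
  using gram_limit_rank1[of n "\<lambda>k. sqrt c"] assms by simp

lemma gram_limit_scale:
  "c \<ge> 0 \<Longrightarrow> gram_limit n A \<Longrightarrow> gram_limit n (\<lambda>k h. c * A k h)"
  by (rule gram_limit_mult[OF gram_limit_const])

lemma gram_limit_sum:
  "finite S \<Longrightarrow> (\<And>i. i \<in> S \<Longrightarrow> gram_limit n (A i)) \<Longrightarrow> gram_limit n (\<lambda>k h. \<Sum>i\<in>S. A i k h)"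
  by (induction S rule: finite_induct)
     (auto intro: gram_limit_add gram_imp_gram_limit[OF gram_zero])

lemma gram_limit_suminf:
  assumes "\<And>i. gram_limit n (A i)" "\<And>k h. k < n \<Longrightarrow> h < n \<Longrightarrow> summable (\<lambda>i. A i k h)"
  shows "gram_limit n (\<lambda>k h. \<Sum>i. A i k h)"
proof (rule gram_limit_tendsto[of sequentially n "\<lambda>m k h. \<Sum>i<m. A i k h"])
  show "\<forall>\<^sub>F m in sequentially. gram_limit n (\<lambda>k h. \<Sum>i<m. A i k h)"
    using assms(1) by (intro always_eventually allI gram_limit_sum) auto
qed (use assms(2) summable_LIMSEQ in auto)

lemma gram_limit_power: "gram_limit n A \<Longrightarrow> gram_limit n (\<lambda>k h. A k h ^ m)"
  by (induction m) (auto intro: gram_limit_const gram_limit_mult)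

lemma gram_limit_exp:
  assumes "gram_limit n A"
  shows "gram_limit n (\<lambda>k h. exp (A k h))"
proof -
  have "gram_limit n (\<lambda>k h. \<Sum>m. inverse (fact m) * A k h ^ m)"
    using assms summable_exp
    by (intro gram_limit_suminf gram_limit_scale gram_limit_power)
       (auto simp: divide_inverse mult.commute)
  then show ?thesis
    by (simp add: exp_def divide_inverse mult.commute)
qed

lemma gram_limit_exp_neg_square_diff:
  assumes "0 \<le> \<kappa>"
  shows "gram_limit n (\<lambda>k h. exp (- \<kappa> * (t k - t h)\<^sup>2))"
proof -
  have "gram_limit n (\<lambda>k h. exp (sqrt (2 * \<kappa>) * t k * (sqrt (2 * \<kappa>) * t h)))"
    by (intro gram_limit_exp gram_limit_rank1)
  with gram_limit_rank1[of n "\<lambda>k. exp (- \<kappa> * (t k)\<^sup>2)"]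
  have "gram_limit n (\<lambda>k h. exp (- \<kappa> * (t k)\<^sup>2) * exp (- \<kappa> * (t h)\<^sup>2)
      * exp (sqrt (2 * \<kappa>) * t k * (sqrt (2 * \<kappa>) * t h)))"
    by (rule gram_limit_mult)
  then show ?thesis
  proof (rule gram_limit_cong)
    fix k h
    have "sqrt (2 * \<kappa>) * t k * (sqrt (2 * \<kappa>) * t h) = 2 * \<kappa> * t k * t h"
      using assms by (simp add: algebra_simps)
    then have "- \<kappa> * (t k)\<^sup>2 + - \<kappa> * (t h)\<^sup>2 + sqrt (2 * \<kappa>) * t k * (sqrt (2 * \<kappa>) * t h)
        = - \<kappa> * (t k - t h)\<^sup>2"
      by (simp add: power2_eq_square algebra_simps)
    then show "exp (- \<kappa> * (t k)\<^sup>2) * exp (- \<kappa> * (t h)\<^sup>2)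
        * exp (sqrt (2 * \<kappa>) * t k * (sqrt (2 * \<kappa>) * t h)) = exp (- \<kappa> * (t k - t h)\<^sup>2)"
      by (simp flip: exp_add)
  qed
qed

text \<open>exp (- c F) = exp (- c a0) * exp (sum of - c a (m + 1) Z^(m + 1)), a power series in Z with
  nonnegative coefficients.\<close>
lemma gram_limit_exp_neg_power_series:
  assumes Z: "gram_limit n Z" and c: "0 \<le> c"
    and coeff: "\<And>m. a (Suc m) \<le> 0"
    and sums: "\<And>k h. k < n \<Longrightarrow> h < n \<Longrightarrow> (\<lambda>m. a m * Z k h ^ m) sums F k h"
  shows "gram_limit n (\<lambda>k h. exp (- c * F k h))"
proof -
  have tail: "(\<lambda>m. (- c * a (Suc m)) * Z k h ^ Suc m) sums (- c * (F k h - a 0))"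
    if "k < n" "h < n" for k h
  proof -
    have "(\<lambda>m. a (Suc m) * Z k h ^ Suc m) sums (F k h - a 0)"
      using sums[OF that] by (subst sums_Suc_iff) simp
    from sums_mult[OF this, of "- c"] show ?thesis by (simp add: mult.assoc)
  qed
  have "gram_limit n (\<lambda>k h. \<Sum>m. (- c * a (Suc m)) * Z k h ^ Suc m)"
  proof (rule gram_limit_suminf)
    show "gram_limit n (\<lambda>k h. (- c * a (Suc m)) * Z k h ^ Suc m)" for m
      using c coeff[of m] Z
      by (intro gram_limit_scale gram_limit_power) (auto simp: mult_nonneg_nonpos)
    show "summable (\<lambda>m. (- c * a (Suc m)) * Z k h ^ Suc m)" if "k < n" "h < n" for k h
      using tail[OF that] by (rule sums_summable)
  qed
  then have "gram_limit n (\<lambda>k h. exp (- c * a 0) * exp (\<Sum>m. (- c * a (Suc m)) * Z k h ^ Suc m))"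
    by (intro gram_limit_scale gram_limit_exp) auto
  then show ?thesis
  proof (rule gram_limit_cong)
    fix k h assume "k < n" "h < n"
    then have "- c * a 0 + (\<Sum>m. (- c * a (Suc m)) * Z k h ^ Suc m) = - c * F k h"
      using tail by (simp add: sums_iff algebra_simps)
    then show "exp (- c * a 0) * exp (\<Sum>m. (- c * a (Suc m)) * Z k h ^ Suc m) = exp (- c * F k h)"
      by (simp flip: exp_add)
  qed
qed

section \<open>Exponentials of the great circle distance\<close>

lemma inverse_sqrt_one_minus_sums:
  fixes y :: real
  assumes "\<bar>y\<bar> < 1"
  shows "(\<lambda>j. pochhammer (1/2) j / fact j * y ^ j) sums inverse (sqrt (1 - y))"
proof -
  have "\<bar>-y\<bar> < 1" using assms by simp
  from gen_binomial_real[OF this, of "-1/2"]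
  have "(\<lambda>j. ((-1/2) gchoose j) * (-y) ^ j) sums (1 + - y) powr (-1/2)" .
  moreover have "((-1/2) gchoose j) * (-y) ^ j = pochhammer (1/2) j / fact j * y ^ j" for j
  proof -
    have "((-1/2) gchoose j) * (-y) ^ j = ((-1) ^ j * (-1) ^ j) * (pochhammer (1/2) j / fact j * y ^ j)"
      unfolding gbinomial_pochhammer power_minus[of y] by (simp add: mult_ac)
    then show ?thesis by (simp flip: power_add)
  qed
  moreover have "(1 + - y) powr (-1/2) = inverse (sqrt (1 - y))"
    using assms by (simp add: powr_minus powr_half_sqrt[symmetric])
  ultimately show ?thesis by simp
qed

text \<open>Indexed so that arcsin x = (\<Sum>n. arcsin_coeff n * x ^ Suc n), the shape expected by
  DERIV_power_series'; the odd coefficients come from termwise integration of 1 / sqrt (1 - x^2).\<close>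
definition arcsin_coeff :: "nat \<Rightarrow> real" where
  "arcsin_coeff n =
     (if even n then pochhammer (1/2) (n div 2) / (fact (n div 2) * real (Suc n)) else 0)"

lemma arcsin_coeff_nonneg: "arcsin_coeff n \<ge> 0"
  unfolding arcsin_coeff_def by (simp add: pochhammer_nonneg)

lemma arcsin_deriv_sums:
  fixes x :: real
  assumes "\<bar>x\<bar> < 1"
  shows "(\<lambda>n. arcsin_coeff n * real (Suc n) * x ^ n) sums inverse (sqrt (1 - x\<^sup>2))"
proof -
  have "\<bar>x\<^sup>2\<bar> < 1" using assms by (simp add: abs_square_less_1)
  from sums_if[OF sums_zero inverse_sqrt_one_minus_sums[OF this]]
  have "(\<lambda>n. if even n then pochhammer (1/2) (n div 2) / fact (n div 2) * (x\<^sup>2) ^ (n div 2)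
      else 0) sums inverse (sqrt (1 - x\<^sup>2))" by simp
  moreover have "(if even n then pochhammer (1/2) (n div 2) / fact (n div 2) * (x\<^sup>2) ^ (n div 2)
      else 0) = arcsin_coeff n * real (Suc n) * x ^ n" for n
    by (auto simp: arcsin_coeff_def power_mult[symmetric] elim!: evenE)
  ultimately show ?thesis by simp
qed

lemma arcsin_sums:
  fixes x :: real
  assumes x: "\<bar>x\<bar> < 1"
  shows "(\<lambda>n. arcsin_coeff n * x ^ Suc n) sums arcsin x"
proof -
  have summable: "summable (\<lambda>n. arcsin_coeff n * y ^ Suc n)" if "\<bar>y\<bar> < 1" for y :: real
  proof (rule summable_comparison_test[OF _ sums_summable[OF arcsin_deriv_sums[of "\<bar>y\<bar>"]]])
    have "\<bar>y\<bar> ^ Suc n \<le> real (Suc n) * \<bar>y\<bar> ^ n" for n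
    proof -
      have "\<bar>y\<bar> ^ Suc n \<le> \<bar>y\<bar> ^ n" using that by (simp add: mult_left_le_one_le)
      also have "\<dots> \<le> real (Suc n) * \<bar>y\<bar> ^ n" by (simp add: distrib_right)
      finally show ?thesis .
    qed
    then show "\<exists>N. \<forall>n\<ge>N. norm (arcsin_coeff n * y ^ Suc n)
        \<le> arcsin_coeff n * real (Suc n) * \<bar>y\<bar> ^ n"
      using arcsin_coeff_nonneg
      by (auto simp: abs_mult power_abs mult.assoc intro!: mult_left_mono simp del: power_Suc)
  qed (use that in simp)
  define h where "h y = (\<Sum>n. arcsin_coeff n * y ^ Suc n) - arcsin y" for y :: real
  have "DERIV h y :> 0" if "y \<in> {-1<..<1}" for y
  proof -
    have "DERIV (\<lambda>y. \<Sum>n. arcsin_coeff n * y ^ Suc n) y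
        :> (\<Sum>n. arcsin_coeff n * real (Suc n) * y ^ n)"
      by (rule DERIV_power_series'[where R=1])
         (use that arcsin_deriv_sums sums_summable in \<open>auto simp: abs_less_iff\<close>)
    moreover have "(\<Sum>n. arcsin_coeff n * real (Suc n) * y ^ n) = inverse (sqrt (1 - y\<^sup>2))"
      using arcsin_deriv_sums[of y] that by (simp add: sums_iff abs_less_iff)
    moreover have "DERIV arcsin y :> inverse (sqrt (1 - y\<^sup>2))"
      using that by (intro DERIV_arcsin) auto
    ultimately have "DERIV h y :> inverse (sqrt (1 - y\<^sup>2)) - inverse (sqrt (1 - y\<^sup>2))"
      unfolding h_def by (intro DERIV_diff) auto
    then show ?thesis by simp
  qed
  then have "h x = h 0"
    by (intro DERIV_isconst3[of "-1" 1]) (use x in \<open>auto simp: abs_less_iff\<close>)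
  with summable[OF x] show ?thesis by (simp add: h_def sums_iff)
qed

lemma gram_limit_arcsin:
  assumes G: "gram_limit n G" and bound: "\<And>k h. k < n \<Longrightarrow> h < n \<Longrightarrow> \<bar>G k h\<bar> < 1"
  shows "gram_limit n (\<lambda>k h. arcsin (G k h))"
proof (rule gram_limit_cong)
  show "gram_limit n (\<lambda>k h. \<Sum>m. arcsin_coeff m * G k h ^ Suc m)"
    using arcsin_sums[OF bound] arcsin_coeff_nonneg G sums_summable
    by (intro gram_limit_suminf gram_limit_scale gram_limit_power) blast+
qed (use arcsin_sums[OF bound] in \<open>simp add: sums_iff\<close>)

text \<open>The arcsin series converges only for |G| < 1, hence the detour through rho * G
  with rho tending to 1 from below.\<close>
lemma gram_limit_exp_arcsin:
  assumes G: "gram_limit n G" and bound: "\<And>k h. k < n \<Longrightarrow> h < n \<Longrightarrow> \<bar>G k h\<bar> \<le> 1"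
    and c: "0 \<le> c"
  shows "gram_limit n (\<lambda>k h. exp (c * arcsin (G k h)))"
proof -
  have inside: "\<bar>\<rho> * G k h\<bar> < 1" if "\<rho> \<in> {0<..<1}" "k < n" "h < n" for \<rho> k h
  proof -
    have "\<bar>\<rho> * G k h\<bar> = \<rho> * \<bar>G k h\<bar>" using that by (simp add: abs_mult)
    also have "\<dots> \<le> \<rho>" using bound[OF that(2,3)] that(1) by (simp add: mult_left_le)
    finally show ?thesis using that(1) by simp
  qed
  have ev: "eventually (\<lambda>\<rho>::real. \<rho> \<in> {0<..<1}) (at_left 1)"
    by (rule eventually_at_left_real) simp
  show ?thesis
  proof (rule gram_limit_tendsto[of "at_left 1" n "\<lambda>\<rho> k h. exp (c * arcsin (\<rho> * G k h))"])
    show "eventually (\<lambda>\<rho>. gram_limit n (\<lambda>k h. exp (c * arcsin (\<rho> * G k h)))) (at_left 1)"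
      using ev
    proof (rule eventually_mono)
      fix \<rho> :: real assume \<rho>: "\<rho> \<in> {0<..<1}"
      then have "gram_limit n (\<lambda>k h. \<rho> * G k h)"
        using G by (intro gram_limit_scale) auto
      then have "gram_limit n (\<lambda>k h. arcsin (\<rho> * G k h))"
        using inside[OF \<rho>] by (rule gram_limit_arcsin)
      then show "gram_limit n (\<lambda>k h. exp (c * arcsin (\<rho> * G k h)))"
        by (intro gram_limit_exp gram_limit_scale[OF c])
    qed
    fix k h assume kh: "k < n" "h < n"
    have "((\<lambda>\<rho>. arcsin (\<rho> * G k h)) \<longlongrightarrow> arcsin (1 * G k h)) (at_left 1)"
    proof (rule continuous_on_tendsto_compose[OF continuous_on_arcsin'])
      show "\<forall>\<^sub>F \<rho> in at_left 1. \<rho> * G k h \<in> {-1..1}"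
      proof (rule eventually_mono[OF ev])
        fix \<rho> :: real assume "\<rho> \<in> {0<..<1}"
        with inside kh have "\<bar>\<rho> * G k h\<bar> < 1" by blast
        then show "\<rho> * G k h \<in> {-1..1}" by (simp add: abs_less_iff)
      qed
      show "((\<lambda>\<rho>. \<rho> * G k h) \<longlongrightarrow> 1 * G k h) (at_left 1)"
        by (intro tendsto_intros)
    qed (use bound[OF kh] in auto)
    then show "((\<lambda>\<rho>. exp (c * arcsin (\<rho> * G k h))) \<longlongrightarrow> exp (c * arcsin (G k h))) (at_left 1)"
      by (auto intro!: tendsto_intros)
  qed simp
qed

lemma gram_limit_exp_arccos:
  assumes G: "gram_limit n G" and bound: "\<And>k h. k < n \<Longrightarrow> h < n \<Longrightarrow> \<bar>G k h\<bar> \<le> 1"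
    and c: "0 \<le> c"
  shows "gram_limit n (\<lambda>k h. exp (- c * arccos (G k h)))"
proof -
  have "gram_limit n (\<lambda>k h. exp (- c * (pi/2)) * exp (c * arcsin (G k h)))"
    using gram_limit_exp_arcsin[OF assms] by (rule gram_limit_scale[OF exp_ge_zero])
  then show ?thesis
  proof (rule gram_limit_cong)
    fix k h assume "k < n" "h < n"
    then have "arccos (G k h) = pi/2 - arcsin (G k h)"
      using bound by (intro arccos_arcsin_eq) (auto simp: abs_le_iff)
    then have "- c * arccos (G k h) = - c * (pi/2) + c * arcsin (G k h)"
      by (simp add: right_diff_distrib)
    then show "exp (- c * (pi/2)) * exp (c * arcsin (G k h)) = exp (- c * arccos (G k h))"
      by (simp only: exp_add)
  qed
qed

lemma gram_coordinate_inner: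
  fixes s :: "nat \<Rightarrow> nat \<Rightarrow> real"
  shows "gram n (\<lambda>k h. \<Sum>i\<le>d. s k i * s h i)"
  unfolding gram_def
proof (intro exI allI impI)
  fix k h
  have "{..d} = set [0..<Suc d]" by auto
  then have "(\<Sum>i\<le>d. s k i * s h i) = (\<Sum>i\<leftarrow>[0..<Suc d]. s k i * s h i)"
    by (simp only: sum_set_upt_conv_sum_list_nat)
  then show "(\<Sum>i\<le>d. s k i * s h i) = (\<Sum>v\<leftarrow>map (\<lambda>i k. s k i) [0..<Suc d]. v k * v h)"
    by (simp add: o_def)
qed

lemma sphere_pts_inner_abs_le:
  assumes "x \<in> sphere_pts d" "y \<in> sphere_pts d"
  shows "\<bar>\<Sum>i\<le>d. x i * y i\<bar> \<le> 1"
proof -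
  have "\<bar>\<Sum>i\<le>d. x i * y i\<bar> \<le> (\<Sum>i\<le>d. \<bar>x i * y i\<bar>)"
    by (rule sum_abs)
  also have "\<dots> \<le> (\<Sum>i\<le>d. ((x i)\<^sup>2 + (y i)\<^sup>2) / 2)"
  proof (rule sum_mono)
    fix i
    have "0 \<le> (\<bar>x i\<bar> - \<bar>y i\<bar>)\<^sup>2" by simp
    then show "\<bar>x i * y i\<bar> \<le> ((x i)\<^sup>2 + (y i)\<^sup>2) / 2"
      by (simp add: power2_eq_square abs_mult algebra_simps)
  qed
  also have "\<dots> = 1"
    using assms by (simp add: sphere_pts_def sum_divide_distrib[symmetric] sum.distrib)
  finally show ?thesis .
qed

lemma gc_dist_nonneg:
  assumes "x \<in> sphere_pts d" "y \<in> sphere_pts d"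
  shows "gc_dist d x y \<ge> 0"
  using sphere_pts_inner_abs_le[OF assms]
  unfolding gc_dist_def by (intro arccos_lbound) (auto simp: abs_le_iff)

lemma gram_limit_exp_gc_dist:
  assumes "\<forall>k<n. s k \<in> sphere_pts d" "0 \<le> c"
  shows "gram_limit n (\<lambda>k h. exp (- c * gc_dist d (s k) (s h)))"
  unfolding gc_dist_def
proof (rule gram_limit_exp_arccos[OF gram_imp_gram_limit[OF gram_coordinate_inner] _ assms(2)])
  fix k h assume "k < n" "h < n"
  with assms(1) show "\<bar>\<Sum>i\<le>d. s k i * s h i\<bar> \<le> 1"
    by (intro sphere_pts_inner_abs_le) auto
qed

section \<open>Taylor series of functions with alternating derivatives\<close>

definition taylor_poly :: "(nat \<Rightarrow> real \<Rightarrow> real) \<Rightarrow> nat \<Rightarrow> real \<Rightarrow> real \<Rightarrow> real" where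
  "taylor_poly D N a x = (\<Sum>m<N. D m a * (x - a) ^ m / fact m)"

lemma taylor_poly_at_base: "taylor_poly D (Suc N) a a = D 0 a"
  by (simp add: taylor_poly_def sum.lessThan_Suc_shift)

text \<open>Differentiating the Taylor polynomial with respect to its base point telescopes.\<close>
lemma taylor_poly_has_derivative_base:
  assumes der: "\<And>m. (D m has_real_derivative D (Suc m) a) (at a)"
  shows "((\<lambda>a. taylor_poly D (Suc N) a x) has_real_derivative D (Suc N) a * (x - a) ^ N / fact N) (at a)"
proof (induction N)
  case 0
  then show ?case using der[of 0] by (simp add: taylor_poly_def)
next
  case (Suc N)
  have split: "(\<lambda>a. taylor_poly D (Suc (Suc N)) a x)
      = (\<lambda>a. taylor_poly D (Suc N) a x + D (Suc N) a * (x - a) ^ Suc N / fact (Suc N))"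
    by (simp add: taylor_poly_def)
  have "((\<lambda>a. (x - a) ^ Suc N) has_real_derivative (1 + of_nat N) * ((0 - 1) * (x - a) ^ N)) (at a)"
    by (intro DERIV_power_Suc DERIV_diff DERIV_const DERIV_ident)
  then have "((\<lambda>a. D (Suc N) a * (x - a) ^ Suc N / fact (Suc N)) has_real_derivative
      (D (Suc (Suc N)) a * (x - a) ^ Suc N + (1 + of_nat N) * ((0 - 1) * (x - a) ^ N) * D (Suc N) a)
        / fact (Suc N)) (at a)"
    by (intro DERIV_cdivide DERIV_mult der)
  from DERIV_add[OF Suc this] have "((\<lambda>a. taylor_poly D (Suc (Suc N)) a x) has_real_derivative
      D (Suc N) a * (x - a) ^ N / fact N
      + (D (Suc (Suc N)) a * (x - a) ^ Suc N + (1 + of_nat N) * ((0 - 1) * (x - a) ^ N) * D (Suc N) a)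
        / fact (Suc N)) (at a)"
    unfolding split .
  moreover have "D (Suc N) a * (x - a) ^ N / fact N
      + (D (Suc (Suc N)) a * (x - a) ^ Suc N + (1 + of_nat N) * ((0 - 1) * (x - a) ^ N) * D (Suc N) a)
        / fact (Suc N)
      = D (Suc (Suc N)) a * (x - a) ^ Suc N / fact (Suc N)"
  proof -
    have telescope: "s * r / F + (q + c * ((0 - 1) * r) * s) / (c * F) = q / (c * F)"
      if "F \<noteq> 0" "c \<noteq> 0" for s r q c F :: real
      using that by (simp add: field_simps)
    have "(fact (Suc N) :: real) = (1 + of_nat N) * fact N" by simp
    then show ?thesis by (simp only:) (rule telescope, simp_all)
  qed
  ultimately show ?case by simp
qed

lemma power_diff_flip: "(z - t) ^ N = (-1) ^ N * (t - z) ^ N" for z t :: real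
  using power_minus[of "t - z" N] by simp

locale alternating_derivatives =
  fixes D :: "nat \<Rightarrow> real \<Rightarrow> real"
  assumes der: "\<And>m t. t > 0 \<Longrightarrow> (D m has_real_derivative D (Suc m) t) (at t)"
    and sign: "\<And>m t. m \<ge> 1 \<Longrightarrow> t > 0 \<Longrightarrow> (-1) ^ m * D m t \<ge> 0"
begin

lemma taylor_term_sign:
  assumes "0 < t" "z \<le> t"
  shows "D (Suc N) t * (z - t) ^ N / fact N \<le> 0"
proof -
  have "D (Suc N) t * (z - t) ^ N / fact N = - ((-1) ^ Suc N * D (Suc N) t) * (t - z) ^ N / fact N"
    by (simp add: power_diff_flip[of z t])
  also have "\<dots> \<le> 0"
    using sign[of "Suc N" t] assms by (simp add: divide_nonpos_pos mult_nonpos_nonneg)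
  finally show ?thesis .
qed

lemma taylor_poly_le:
  assumes "0 < z" "z \<le> w"
  shows "taylor_poly D (Suc N) w z \<le> D 0 z"
proof -
  have "taylor_poly D (Suc N) w z \<le> taylor_poly D (Suc N) z z"
    using assms(2)
  proof (rule DERIV_nonpos_imp_nonincreasing)
    fix t assume "z \<le> t" "t \<le> w"
    with assms have "t > 0" by simp
    then have "((\<lambda>a. taylor_poly D (Suc N) a z) has_real_derivative
        D (Suc N) t * (z - t) ^ N / fact N) (at t)"
      using der by (intro taylor_poly_has_derivative_base)
    with assms \<open>t > 0\<close> \<open>z \<le> t\<close>
    show "\<exists>y. ((\<lambda>a. taylor_poly D (Suc N) a z) has_real_derivative y) (at t) \<and> y \<le> 0"
      using taylor_term_sign by blast
  qed
  then show ?thesis by (simp add: taylor_poly_at_base)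
qed

lemma taylor_poly_ge:
  assumes "0 < y" "y \<le> b"
  shows "D 0 b \<le> taylor_poly D (Suc N) b y"
proof -
  have "0 \<le> D (Suc m) b * (y - b) ^ Suc m / fact (Suc m)" for m
  proof -
    have "D (Suc m) b * (y - b) ^ Suc m = ((-1) ^ Suc m * D (Suc m) b) * (b - y) ^ Suc m"
      by (subst power_diff_flip[of y b]) (simp only: mult_ac)
    also have "\<dots> \<ge> 0" by (rule mult_nonneg_nonneg[OF sign]) (use assms in auto)
    finally show ?thesis by simp
  qed
  then show ?thesis
    unfolding taylor_poly_def sum.lessThan_Suc_shift by (simp add: sum_nonneg)
qed

text \<open>With q = (b - x) / (b - y), the function
  a \<mapsto> q ^ N * taylor_poly D (Suc N) a y - taylor_poly D (Suc N) a x
  is nonincreasing on [x, b], since there (a - x) ^ N <= q ^ N * (a - y) ^ N.\<close>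
lemma taylor_remainder_le:
  assumes y: "0 < y" "y < x" and x: "x < b"
  shows "D 0 x - taylor_poly D (Suc N) b x \<le> ((b - x) / (b - y)) ^ N * (D 0 y - D 0 b)"
proof -
  define q where "q = (b - x) / (b - y)"
  have q: "0 \<le> q" using y x by (simp add: q_def)
  have ratio: "(t - x) ^ N \<le> q ^ N * (t - y) ^ N" if "x \<le> t" "t \<le> b" for t
  proof -
    have "(b - x) * (t - y) - (t - x) * (b - y) = (x - y) * (b - t)"
      by (simp add: algebra_simps)
    moreover have "(x - y) * (b - t) \<ge> 0" using that y by simp
    ultimately have "(t - x) * (b - y) \<le> (b - x) * (t - y)" by simp
    then have "t - x \<le> q * (t - y)" using x y by (simp add: q_def field_simps)
    then show ?thesis using that by (simp add: power_mono flip: power_mult_distrib)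
  qed
  define E where "E a = q ^ N * taylor_poly D (Suc N) a y - taylor_poly D (Suc N) a x" for a
  have "E b \<le> E x"
    using x[THEN less_imp_le]
  proof (rule DERIV_nonpos_imp_nonincreasing)
    fix t assume t: "x \<le> t" "t \<le> b"
    then have "t > 0" using y by simp
    have "(E has_real_derivative q ^ N * (D (Suc N) t * (y - t) ^ N / fact N)
        - D (Suc N) t * (x - t) ^ N / fact N) (at t)"
      unfolding E_def
      by (intro DERIV_diff DERIV_cmult taylor_poly_has_derivative_base der[OF \<open>t > 0\<close>])
    moreover have "q ^ N * (D (Suc N) t * (y - t) ^ N / fact N) - D (Suc N) t * (x - t) ^ N / fact N
        = ((-1) ^ N * D (Suc N) t) * (q ^ N * (t - y) ^ N - (t - x) ^ N) / fact N"
      by (simp add: power_diff_flip[of y t] power_diff_flip[of x t] algebra_simps diff_divide_distrib)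
    moreover have "((-1) ^ N * D (Suc N) t) * (q ^ N * (t - y) ^ N - (t - x) ^ N) / fact N \<le> 0"
      using sign[of "Suc N" t] \<open>t > 0\<close> ratio[OF t]
      by (intro divide_nonpos_pos mult_nonpos_nonneg[of "(-1) ^ N * D (Suc N) t"]) auto
    ultimately show "\<exists>d. (E has_real_derivative d) (at t) \<and> d \<le> 0" by auto
  qed
  then have "D 0 x - taylor_poly D (Suc N) b x
      \<le> q ^ N * (taylor_poly D (Suc N) x y - taylor_poly D (Suc N) b y)"
    by (simp add: E_def taylor_poly_at_base algebra_simps)
  also have "\<dots> \<le> q ^ N * (D 0 y - D 0 b)"
    using taylor_poly_le[of y x N] taylor_poly_ge[of y b N] y x q
    by (intro mult_left_mono) auto
  finally show ?thesis by (simp add: q_def)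
qed

theorem taylor_series_sums:
  assumes "0 < x" "x < b"
  shows "(\<lambda>m. D m b * (x - b) ^ m / fact m) sums D 0 x"
proof -
  define y where "y = x / 2"
  have y: "0 < y" "y < x" using assms by (auto simp: y_def)
  define R where "R N = D 0 x - taylor_poly D (Suc N) b x" for N
  have "(\<lambda>N. ((b - x) / (b - y)) ^ N * (D 0 y - D 0 b)) \<longlonglongrightarrow> 0"
    using y assms by (intro tendsto_mult_left_zero LIMSEQ_power_zero) auto
  moreover have "0 \<le> R N" for N
    using taylor_poly_le[of x b N] assms by (simp add: R_def)
  moreover have "R N \<le> ((b - x) / (b - y)) ^ N * (D 0 y - D 0 b)" for N
    unfolding R_def using taylor_remainder_le y assms by blast
  ultimately have "R \<longlonglongrightarrow> 0"
    by (intro tendsto_sandwich[of "\<lambda>_. 0" R _ "\<lambda>N. ((b - x) / (b - y)) ^ N * (D 0 y - D 0 b)"]) auto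
  then have "(\<lambda>N. D 0 x - R N) \<longlonglongrightarrow> D 0 x - 0"
    by (intro tendsto_intros)
  then have "(\<lambda>N. taylor_poly D (Suc N) b x) \<longlonglongrightarrow> D 0 x"
    by (simp add: R_def)
  then have "(\<lambda>N. taylor_poly D N b x) \<longlonglongrightarrow> D 0 x"
    by (rule LIMSEQ_imp_Suc)
  then show ?thesis
    by (simp add: sums_def taylor_poly_def)
qed

end

section \<open>Exponentials of a function with completely monotone derivative\<close>

lemma LIMSEQ_Suc_mult_at_inverse:
  fixes g :: "real \<Rightarrow> real"
  assumes "g 0 = 0" and "(g has_real_derivative L) (at 0)"
  shows "(\<lambda>j. real (Suc j) * g (inverse (real (Suc j)))) \<longlonglongrightarrow> L"
proof -
  have "((\<lambda>h. g h / h) \<longlongrightarrow> L) (at 0)"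
    using assms unfolding DERIV_def by simp
  moreover have "filterlim (\<lambda>j. inverse (real (Suc j))) (at 0) sequentially"
    unfolding filterlim_at using LIMSEQ_inverse_real_of_nat by simp
  ultimately have "(\<lambda>j. g (inverse (real (Suc j))) / inverse (real (Suc j))) \<longlonglongrightarrow> L"
    by (rule filterlim_compose)
  then show ?thesis by (simp add: divide_inverse mult.commute)
qed

lemma LIMSEQ_Suc_mult_one_minus_exp:
  fixes x :: real
  shows "(\<lambda>j. real (Suc j) * (1 - exp (- (x + 1 / real (Suc j)) / real (Suc j)))) \<longlonglongrightarrow> x"
proof -
  define g where "g y = 1 - exp (- (x + y) * y)" for y :: real
  have "(g has_real_derivative x) (at 0)"
    unfolding g_def by (auto intro!: derivative_eq_intros)
  then have "(\<lambda>j. real (Suc j) * g (inverse (real (Suc j)))) \<longlonglongrightarrow> x"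
    by (intro LIMSEQ_Suc_mult_at_inverse) (simp add: g_def)
  then show ?thesis by (simp add: g_def divide_inverse)
qed

lemma one_minus_exp_scaled_nonneg:
  fixes x b :: real
  assumes "0 \<le> x" "0 < b"
  shows "0 \<le> b * (1 - exp (- (x + 1 / b) / b))"
proof -
  have "0 \<le> (x + 1 / b) / b" using assms by simp
  then have "exp (- (x + 1 / b) / b) \<le> 1"
    by (simp only: minus_divide_left[symmetric] exp_le_one_iff neg_le_0_iff_le)
  with assms show ?thesis by simp
qed

locale cm_derivative =
  fixes \<psi> :: "real \<Rightarrow> real"
  assumes cont: "continuous_on {0..} \<psi>"
    and diff: "\<forall>t>0. \<psi> differentiable (at t)"
    and cm: "completely_monotone (deriv \<psi>)"
begin

lemma higher_deriv_eq: "(deriv ^^ Suc m) \<psi> = (deriv ^^ m) (deriv \<psi>)"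
  by (simp only: funpow_Suc_right o_def)

lemma higher_deriv_has_derivative:
  assumes "t > 0"
  shows "((deriv ^^ m) \<psi> has_real_derivative (deriv ^^ Suc m) \<psi> t) (at t)"
proof (cases m)
  case 0
  then show ?thesis using diff assms by (simp add: DERIV_deriv_iff_real_differentiable)
next
  case (Suc m')
  have differentiable: "(deriv ^^ m') (deriv \<psi>) differentiable (at t)"
    using cm assms unfolding completely_monotone_def by blast
  have "(deriv ^^ Suc (Suc m')) \<psi> = (deriv ^^ Suc m') (deriv \<psi>)"
    by (rule higher_deriv_eq)
  also have "\<dots> = deriv ((deriv ^^ m') (deriv \<psi>))"
    by simp
  finally show ?thesis
    using differentiable unfolding Suc higher_deriv_eq[of m']
    by (simp add: DERIV_deriv_iff_real_differentiable)
qed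

lemma higher_deriv_sign:
  assumes "m \<ge> 1" "t > 0"
  shows "(-1) ^ m * (deriv ^^ m) \<psi> t \<le> 0"
proof -
  obtain m' where m: "m = Suc m'" using assms(1) by (cases m) auto
  have "(-1) ^ m' * (deriv ^^ m') (deriv \<psi>) t \<ge> 0"
    using cm assms(2) unfolding completely_monotone_def by blast
  then show ?thesis unfolding m higher_deriv_eq by simp
qed

lemma psi_taylor_series_sums:
  assumes "0 < v" "v < b"
  shows "(\<lambda>m. (deriv ^^ m) \<psi> b * (v - b) ^ m / fact m) sums \<psi> v"
proof -
  interpret neg: alternating_derivatives "\<lambda>m t. - (deriv ^^ m) \<psi> t"
    using higher_deriv_has_derivative higher_deriv_sign
    by unfold_locales (auto intro: DERIV_minus)
  from sums_minus[OF neg.taylor_series_sums[OF assms]] show ?thesis by simp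
qed

definition psi_coeff :: "real \<Rightarrow> nat \<Rightarrow> real" where
  "psi_coeff b m = (deriv ^^ m) \<psi> b * (- b) ^ m / fact m"

lemma psi_coeff_Suc_nonpos:
  assumes "b > 0"
  shows "psi_coeff b (Suc m) \<le> 0"
proof -
  have "psi_coeff b (Suc m) = ((-1) ^ Suc m * (deriv ^^ Suc m) \<psi> b) * b ^ Suc m / fact (Suc m)"
    unfolding psi_coeff_def by (simp add: power_minus[of b "Suc m"] del: power_Suc)
  also have "\<dots> \<le> 0"
    using higher_deriv_sign[of "Suc m" b] assms
    by (intro divide_nonpos_pos mult_nonpos_nonneg[of "(-1) ^ Suc m * (deriv ^^ Suc m) \<psi> b"]) auto
  finally show ?thesis .
qed

lemma psi_power_series_sums:
  assumes "b > 0" "0 < z" "z < 1"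
  shows "(\<lambda>m. psi_coeff b m * z ^ m) sums \<psi> (b * (1 - z))"
proof -
  have "0 < b * (1 - z)" "b * (1 - z) < b" using assms by auto
  moreover have "b * (1 - z) - b = (- b) * z" by (simp add: algebra_simps)
  moreover have "(deriv ^^ m) \<psi> b * ((- b) * z) ^ m / fact m = psi_coeff b m * z ^ m" for m
    unfolding psi_coeff_def power_mult_distrib
    by (simp only: times_divide_eq_left times_divide_eq_right mult_ac)
  ultimately show ?thesis
    using psi_taylor_series_sums[of "b * (1 - z)" b] by simp
qed

text \<open>The shift by 1 / b keeps Z strictly below 1, so that b * (1 - Z) stays in the open
  interval (0, b) where the Taylor series at b represents psi.\<close>
lemma gram_limit_exp_neg_psi_approx:
  assumes U: "\<And>k h. k < n \<Longrightarrow> h < n \<Longrightarrow> 0 \<le> U k h"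
    and exp_U: "\<And>\<kappa>. 0 \<le> \<kappa> \<Longrightarrow> gram_limit n (\<lambda>k h. exp (- \<kappa> * U k h))"
    and c: "0 \<le> c" and b: "0 < b"
  shows "gram_limit n (\<lambda>k h. exp (- c * \<psi> (b * (1 - exp (- (U k h + 1 / b) / b)))))"
proof (rule gram_limit_exp_neg_power_series[where a = "psi_coeff b"])
  show "0 \<le> c" "\<And>m. psi_coeff b (Suc m) \<le> 0"
    using c psi_coeff_Suc_nonpos[OF b] by auto
  have "gram_limit n (\<lambda>k h. exp (- 1 / b\<^sup>2) * exp (- (1 / b) * U k h))"
    using b by (intro gram_limit_scale exp_U) auto
  then show "gram_limit n (\<lambda>k h. exp (- (U k h + 1 / b) / b))"
  proof (rule gram_limit_cong)
    fix k h
    have "- 1 / b\<^sup>2 + - (1 / b) * U k h = - (U k h + 1 / b) / b"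
      using b by (simp add: field_simps power2_eq_square)
    then show "exp (- 1 / b\<^sup>2) * exp (- (1 / b) * U k h) = exp (- (U k h + 1 / b) / b)"
      by (simp only: exp_add[symmetric])
  qed
  fix k h assume "k < n" "h < n"
  then have "0 < (U k h + 1 / b) / b" using U b by (simp add: add_nonneg_pos)
  then have "exp (- (U k h + 1 / b) / b) < 1"
    by (simp only: minus_divide_left[symmetric] exp_less_one_iff neg_less_0_iff_less)
  then show "(\<lambda>m. psi_coeff b m * exp (- (U k h + 1 / b) / b) ^ m)
      sums \<psi> (b * (1 - exp (- (U k h + 1 / b) / b)))"
    using b by (intro psi_power_series_sums) auto
qed

lemma gram_limit_exp_neg_psi:
  assumes U: "\<And>k h. k < n \<Longrightarrow> h < n \<Longrightarrow> 0 \<le> U k h"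
    and exp_U: "\<And>\<kappa>. 0 \<le> \<kappa> \<Longrightarrow> gram_limit n (\<lambda>k h. exp (- \<kappa> * U k h))"
    and c: "0 \<le> c"
  shows "gram_limit n (\<lambda>k h. exp (- c * \<psi> (U k h)))"
proof (rule gram_limit_tendsto[of sequentially n
    "\<lambda>j k h. exp (- c * \<psi> (real (Suc j) * (1 - exp (- (U k h + 1 / real (Suc j)) / real (Suc j)))))"])
  show "\<forall>\<^sub>F j in sequentially. gram_limit n
      (\<lambda>k h. exp (- c * \<psi> (real (Suc j) * (1 - exp (- (U k h + 1 / real (Suc j)) / real (Suc j))))))"
    using U exp_U c by (intro always_eventually allI gram_limit_exp_neg_psi_approx) auto
  fix k h assume "k < n" "h < n"
  then have "0 \<le> U k h" by (rule U)
  then have "(\<lambda>j. \<psi> (real (Suc j) * (1 - exp (- (U k h + 1 / real (Suc j)) / real (Suc j)))))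
      \<longlonglongrightarrow> \<psi> (U k h)"
  proof (intro continuous_on_tendsto_compose[OF cont LIMSEQ_Suc_mult_one_minus_exp]
      always_eventually allI)
    fix j
    show "real (Suc j) * (1 - exp (- (U k h + 1 / real (Suc j)) / real (Suc j))) \<in> {0..}"
      using one_minus_exp_scaled_nonneg[OF \<open>0 \<le> U k h\<close>, of "real (Suc j)"] by simp
  qed (use \<open>0 \<le> U k h\<close> in simp)
  then show "(\<lambda>j. exp (- c * \<psi> (real (Suc j) * (1 - exp (- (U k h + 1 / real (Suc j)) / real (Suc j))))))
      \<longlonglongrightarrow> exp (- c * \<psi> (U k h))"
    by (intro tendsto_intros)
qed simp

end

section \<open>The space-time kernel\<close>

lemma exp_neg_geometric_sums:
  fixes x N :: real
  assumes "0 < x" "0 < N"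
  shows "(\<lambda>i. exp (- x / N) ^ Suc i / N) sums inverse (N * (exp (x / N) - 1))"
proof -
  have "norm (exp (- x / N)) < 1" using assms by simp
  from geometric_sums[OF this] have "(\<lambda>i. exp (- x / N) ^ Suc i) sums (1 / (1 - exp (- x / N)) - 1)"
    by (subst sums_Suc_iff) simp
  from sums_divide[OF this, of N]
  have "(\<lambda>i. exp (- x / N) ^ Suc i / N) sums ((1 / (1 - exp (- x / N)) - 1) / N)" .
  moreover have "(1 / (1 - exp (- x / N)) - 1) / N = inverse (N * (exp (x / N) - 1))"
  proof -
    define e where "e = exp (x / N)"
    have "e > 1" "exp (- x / N) = inverse e" using assms by (simp_all add: e_def exp_minus)
    then show ?thesis
      using assms(2) by (simp only: e_def[symmetric]) (simp add: field_simps)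
  qed
  ultimately show ?thesis by simp
qed

text \<open>The Laplace transform 1 / x = integral of exp (- s x) over s > 0, discretised as a
  Riemann sum with step 1 / N.\<close>
lemma gram_limit_inverse:
  assumes pos: "\<And>k h. k < n \<Longrightarrow> h < n \<Longrightarrow> 0 < X k h"
    and exp_X: "\<And>c. 0 \<le> c \<Longrightarrow> gram_limit n (\<lambda>k h. exp (- c * X k h))"
  shows "gram_limit n (\<lambda>k h. 1 / X k h)"
proof (rule gram_limit_tendsto[of sequentially n
    "\<lambda>j k h. \<Sum>i. exp (- X k h / real (Suc j)) ^ Suc i / real (Suc j)"])
  show "\<forall>\<^sub>F j in sequentially. gram_limit n (\<lambda>k h. \<Sum>i. exp (- X k h / real (Suc j)) ^ Suc i / real (Suc j))"
  proof (intro always_eventually allI gram_limit_suminf)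
    fix i j
    have "gram_limit n (\<lambda>k h. inverse (real (Suc j)) * exp (- (real (Suc i) / real (Suc j)) * X k h))"
      by (intro gram_limit_scale exp_X) auto
    then show "gram_limit n (\<lambda>k h. exp (- X k h / real (Suc j)) ^ Suc i / real (Suc j))"
    proof (rule gram_limit_cong)
      fix k h
      have "exp (- X k h / real (Suc j)) ^ Suc i = exp (real (Suc i) * (- X k h / real (Suc j)))"
        by (rule exp_of_nat_mult[symmetric])
      also have "real (Suc i) * (- X k h / real (Suc j)) = - (real (Suc i) / real (Suc j)) * X k h"
        by simp
      finally show "inverse (real (Suc j)) * exp (- (real (Suc i) / real (Suc j)) * X k h)
          = exp (- X k h / real (Suc j)) ^ Suc i / real (Suc j)"
        by (simp add: divide_inverse mult.commute)
    qed
  next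
    fix j k h assume "k < n" "h < n"
    with pos show "summable (\<lambda>i. exp (- X k h / real (Suc j)) ^ Suc i / real (Suc j))"
      using exp_neg_geometric_sums sums_summable by (meson of_nat_0_less_iff zero_less_Suc)
  qed
  fix k h assume "k < n" "h < n"
  then have X: "0 < X k h" by (rule pos)
  have "(\<lambda>j. real (Suc j) * (exp (X k h * inverse (real (Suc j))) - 1)) \<longlonglongrightarrow> X k h"
    by (rule LIMSEQ_Suc_mult_at_inverse) (auto intro!: derivative_eq_intros)
  then have "(\<lambda>j. inverse (real (Suc j) * (exp (X k h / real (Suc j)) - 1))) \<longlonglongrightarrow> inverse (X k h)"
    using X by (intro tendsto_inverse) (auto simp: divide_inverse)
  moreover have "(\<Sum>i. exp (- X k h / real (Suc j)) ^ Suc i / real (Suc j))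
      = inverse (real (Suc j) * (exp (X k h / real (Suc j)) - 1))" for j
    using exp_neg_geometric_sums[OF X, of "real (Suc j)"] by (simp add: sums_iff)
  ultimately show "(\<lambda>j. \<Sum>i. exp (- X k h / real (Suc j)) ^ Suc i / real (Suc j)) \<longlonglongrightarrow> 1 / X k h"
    by (simp add: divide_inverse)
qed simp

lemma (in cm_derivative) gram_limit_inverse_space_time:
  assumes sph: "\<forall>k<n. s k \<in> sphere_pts d" and \<xi>: "0 < \<xi>"
    and pos: "\<And>u. 0 \<le> u \<Longrightarrow> 0 < \<psi> u"
  shows "gram_limit n (\<lambda>k h. 1 / (gc_dist d (s k) (s h) + \<xi> * \<psi> ((t k - t h)\<^sup>2)))"
proof (rule gram_limit_inverse)
  fix k h assume "k < n" "h < n"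
  then show "0 < gc_dist d (s k) (s h) + \<xi> * \<psi> ((t k - t h)\<^sup>2)"
    using sph gc_dist_nonneg pos \<xi> by (simp add: add_nonneg_pos)
next
  fix c :: real assume c: "0 \<le> c"
  have "gram_limit n (\<lambda>k h. exp (- c * gc_dist d (s k) (s h)) * exp (- (c * \<xi>) * \<psi> ((t k - t h)\<^sup>2)))"
    using sph c \<xi>
    by (intro gram_limit_mult gram_limit_exp_gc_dist gram_limit_exp_neg_psi gram_limit_exp_neg_square_diff)
       auto
  then show "gram_limit n (\<lambda>k h. exp (- c * (gc_dist d (s k) (s h) + \<xi> * \<psi> ((t k - t h)\<^sup>2))))"
    by (rule gram_limit_cong) (simp add: algebra_simps flip: exp_add)
qed

lemma stieltjes_rescaled_integral:
  fixes M :: "real measure" and \<phi> :: "real \<Rightarrow> real" and \<theta> p \<sigma> :: real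
  assumes rep: "\<forall>t\<ge>0. integrable M (\<lambda>\<xi>. 1 / (t + \<xi>)) \<and> \<phi> t = (\<integral>\<xi>. 1 / (t + \<xi>) \<partial>M)"
    and "0 \<le> \<theta>" "0 < p"
  shows "integrable M (\<lambda>\<xi>. \<sigma> / (\<theta> + \<xi> * p))"
    and "\<sigma> / p * \<phi> (\<theta> / p) = (\<integral>\<xi>. \<sigma> / (\<theta> + \<xi> * p) \<partial>M)"
proof -
  have eq: "\<sigma> / (\<theta> + \<xi> * p) = \<sigma> / p * (1 / (\<theta> / p + \<xi>))" for \<xi>
  proof -
    have "\<theta> / p + \<xi> = (\<theta> + \<xi> * p) / p" using \<open>0 < p\<close> by (simp add: field_simps)
    then show ?thesis using \<open>0 < p\<close> by simp
  qed
  have "0 \<le> \<theta> / p" using assms by simp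
  with rep have int: "integrable M (\<lambda>\<xi>. 1 / (\<theta> / p + \<xi>))"
    and \<phi>: "\<phi> (\<theta> / p) = (\<integral>\<xi>. 1 / (\<theta> / p + \<xi>) \<partial>M)"
    by blast+
  from int show "integrable M (\<lambda>\<xi>. \<sigma> / (\<theta> + \<xi> * p))"
    unfolding eq by (rule integrable_mult_right)
  show "\<sigma> / p * \<phi> (\<theta> / p) = (\<integral>\<xi>. \<sigma> / (\<theta> + \<xi> * p) \<partial>M)"
    unfolding eq integral_mult_right_zero \<phi> ..
qed

lemma quadratic_form_integral_nonneg:
  fixes F :: "nat \<Rightarrow> nat \<Rightarrow> 'a \<Rightarrow> real"
  assumes int: "\<And>k h. k < n \<Longrightarrow> h < n \<Longrightarrow> integrable M (F k h)"
    and AE: "AE \<xi> in M. 0 \<le> (\<Sum>k<n. \<Sum>h<n. a k * a h * F k h \<xi>)"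
  shows "0 \<le> (\<Sum>k<n. \<Sum>h<n. a k * a h * (\<integral>\<xi>. F k h \<xi> \<partial>M))"
proof -
  have "(\<integral>\<xi>. (\<Sum>k<n. \<Sum>h<n. a k * a h * F k h \<xi>) \<partial>M)
      = (\<Sum>k<n. \<integral>\<xi>. (\<Sum>h<n. a k * a h * F k h \<xi>) \<partial>M)"
    using int by (intro Bochner_Integration.integral_sum integrable_sum integrable_mult_right) auto
  also have "\<dots> = (\<Sum>k<n. \<Sum>h<n. a k * a h * (\<integral>\<xi>. F k h \<xi> \<partial>M))"
    using int by (intro sum.cong refl) (simp add: Bochner_Integration.integral_sum)
  finally have "(\<Sum>k<n. \<Sum>h<n. a k * a h * (\<integral>\<xi>. F k h \<xi> \<partial>M))
      = (\<integral>\<xi>. (\<Sum>k<n. \<Sum>h<n. a k * a h * F k h \<xi>) \<partial>M)" ..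
  also have "\<dots> \<ge> 0" using AE by (rule integral_nonneg_AE)
  finally show ?thesis .
qed

lemma (in cm_derivative) stieltjes_space_time_form_nonneg:
  fixes M :: "real measure" and \<phi> :: "real \<Rightarrow> real" and \<sigma> :: real
    and n :: nat and s :: "nat \<Rightarrow> nat \<Rightarrow> real" and t a :: "nat \<Rightarrow> real"
  assumes AE_pos: "AE \<xi> in M. 0 < \<xi>"
    and rep: "\<forall>t\<ge>0. integrable M (\<lambda>\<xi>. 1 / (t + \<xi>)) \<and> \<phi> t = (\<integral>\<xi>. 1 / (t + \<xi>) \<partial>M)"
    and pos: "\<And>u. 0 \<le> u \<Longrightarrow> 0 < \<psi> u" and \<sigma>: "0 \<le> \<sigma>"
    and sph: "\<forall>k<n. s k \<in> sphere_pts d"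
  shows "0 \<le> (\<Sum>k<n. \<Sum>h<n. a k * a h *
      (\<sigma> / \<psi> ((t k - t h)\<^sup>2) * \<phi> (gc_dist d (s k) (s h) / \<psi> ((t k - t h)\<^sup>2))))"
proof -
  define F where "F k h \<xi> = \<sigma> / (gc_dist d (s k) (s h) + \<xi> * \<psi> ((t k - t h)\<^sup>2))" for k h \<xi>
  have "integrable M (F k h)"
    and "\<sigma> / \<psi> ((t k - t h)\<^sup>2) * \<phi> (gc_dist d (s k) (s h) / \<psi> ((t k - t h)\<^sup>2))
      = (\<integral>\<xi>. F k h \<xi> \<partial>M)"
    if "k < n" "h < n" for k h
    using stieltjes_rescaled_integral[OF rep gc_dist_nonneg] sph pos that
    unfolding F_def by auto
  moreover have "AE \<xi> in M. 0 \<le> (\<Sum>k<n. \<Sum>h<n. a k * a h * F k h \<xi>)"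
    using AE_pos
  proof (rule AE_mp, intro AE_I2 impI)
    fix \<xi> :: real assume "0 < \<xi>"
    with sph pos \<sigma> have "gram_limit n
        (\<lambda>k h. \<sigma> * (1 / (gc_dist d (s k) (s h) + \<xi> * \<psi> ((t k - t h)\<^sup>2))))"
      by (intro gram_limit_scale gram_limit_inverse_space_time) auto
    from gram_limit_quadratic_form_nonneg[OF this, of a]
    show "0 \<le> (\<Sum>k<n. \<Sum>h<n. a k * a h * F k h \<xi>)" by (simp add: F_def)
  qed
  ultimately show ?thesis
    using quadratic_form_integral_nonneg[of n M F a] by simp
qed

theorem theorem2:
  fixes \<sigma>2 :: real and \<phi> \<psi> :: "real \<Rightarrow> real" and C :: "real \<Rightarrow> real \<Rightarrow> real"
  assumes "\<sigma>2 > 0"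
    and "stieltjes_fun \<phi>" and "\<phi> 0 = 1"
    and "\<forall>t\<ge>0. \<psi> t > 0"
    and "continuous_on {0..} \<psi>"
    and "\<forall>t>0. \<psi> differentiable (at t)"
    and "completely_monotone (deriv \<psi>)"
    and "\<forall>\<theta> u. C \<theta> u = \<sigma>2 / \<psi> (u\<^sup>2) * \<phi> (\<theta> / \<psi> (u\<^sup>2))"
  shows "\<forall>d\<ge>1. covariance_sphere_time d C"
proof (intro allI impI)
  fix d :: nat
  interpret cm_derivative \<psi> using assms(5-7) by unfold_locales
  from assms(2) obtain M :: "real measure" where "sets M = sets borel" "emeasure M {..0} = 0"
    and rep: "\<forall>t\<ge>0. integrable M (\<lambda>\<xi>. 1 / (t + \<xi>)) \<and> \<phi> t = (\<integral>\<xi>. 1 / (t + \<xi>) \<partial>M)"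
    unfolding stieltjes_fun_def by blast
  then have "AE \<xi> in M. 0 < \<xi>"
    by (intro AE_I'[of "{..0}"] null_setsI) auto
  with rep assms(1,4) show "covariance_sphere_time d C"
    unfolding covariance_sphere_time_def assms(8)[rule_format]
    by (intro allI impI stieltjes_space_time_form_nonneg) auto
qed

end
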